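(* Let $k$ be a field and $S=k[x_1,\dots,x_n]$. Let $I\subseteq K\subseteq S$ and $J\subseteq L\subseteq S$ be monomial ideals with $\dim_k S/I<\infty$ and $\dim_k S/J<\infty$, and let $\phi\colon K/I\to L/J$ be an $S$-module isomorphism sending monomials to monomials. Let $M=(S/I\oplus S/J)/\langle (f,-\phi(f))\mid f\in K/I\rangle$, $d=\dim_k M$, let $A_i$ be the $d\times d$ matrix of multiplication by $x_i$ on $M$ in its natural monomial basis, and let $\mathcal{A}$ be the unital $k$-algebra generated by $A_1,\dots,A_n$. Let $\lambda$ (resp. $\mu$) be the $n$-dimensional Young diagram corresponding to $I$ (resp. $J$), and let $\nu$ be the skew shape associated with $K/I$. Then \[ \dim_k\mathcal{A}\le d\iff |\nu|\le|\lambda\cap\mu|. \]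
   Context: Monomials $x^a$ are identified with $a\in\mathbb{N}^n$. The $n$-dimensional Young diagram corresponding to a monomial ideal $I$ with $\dim_k S/I<\infty$ is $\{a\in\mathbb{N}^n: x^a\notin I\}$. The skew shape associated with $K/I$ is $\{a\in\mathbb{N}^n: x^a\in K,\ x^a\notin I\}$. An isomorphism $\phi$ sends monomials to monomials if it maps the class of each monomial of $K$ not in $I$ to the class of a monomial of $L$ not in $J$. *)

theory Defs
  imports Complex_Main "HOL-Library.Function_Algebras"
begin

text \<open>A monomial x^a of S = k[x_0,...,x_(n-1)] is identified with its exponent
vector a :: nat => nat, where a i = 0 for i >= n.  A monomial ideal is identified
with the set of (exponent vectors of) monomials it contains; this is an up-closed
set of exponent vectors, and every up-closed set arises from a unique monomial ideal.\<close>

definition mono_set :: "nat \<Rightarrow> (nat \<Rightarrow> nat) set" where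
  "mono_set n = {a. \<forall>i\<ge>n. a i = 0}"

definition monomial_ideal :: "nat \<Rightarrow> (nat \<Rightarrow> nat) set \<Rightarrow> bool" where
  "monomial_ideal n E \<longleftrightarrow> E \<subseteq> mono_set n \<and>
     (\<forall>a\<in>E. \<forall>b\<in>mono_set n. a \<le> b \<longrightarrow> b \<in> E)"

text \<open>dim_k S/I < infinity: only finitely many monomials lie outside I.\<close>
definition finite_colength :: "nat \<Rightarrow> (nat \<Rightarrow> nat) set \<Rightarrow> bool" where
  "finite_colength n E \<longleftrightarrow> finite (mono_set n - E)"

definition young :: "nat \<Rightarrow> (nat \<Rightarrow> nat) set \<Rightarrow> (nat \<Rightarrow> nat) set" where
  "young n E = mono_set n - E"

definition skew :: "(nat \<Rightarrow> nat) set \<Rightarrow> (nat \<Rightarrow> nat) set \<Rightarrow> (nat \<Rightarrow> nat) set" where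
  "skew K I = K - I"

text \<open>K/I (for monomial ideals I within K, with K/I finite dimensional) has k-basis the
classes of the monomials of the skew shape K - I; an element is given by its coefficient
function, vanishing outside K - I.\<close>

definition qspace :: "(nat \<Rightarrow> nat) set \<Rightarrow> (nat \<Rightarrow> nat) set \<Rightarrow> ((nat \<Rightarrow> nat) \<Rightarrow> 'k::field) set" where
  "qspace K I = {f. \<forall>a. a \<notin> K - I \<longrightarrow> f a = 0}"

definition xmul :: "(nat \<Rightarrow> nat) set \<Rightarrow> (nat \<Rightarrow> nat) set \<Rightarrow> nat \<Rightarrow>
    ((nat \<Rightarrow> nat) \<Rightarrow> 'k::field) \<Rightarrow> ((nat \<Rightarrow> nat) \<Rightarrow> 'k)" where
  "xmul K I i f = (\<lambda>b. if b \<in> K - I \<and> 0 < b i then f (b(i := b i - 1)) else 0)"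

definition mono_vec :: "(nat \<Rightarrow> nat) \<Rightarrow> ((nat \<Rightarrow> nat) \<Rightarrow> 'k::field)" where
  "mono_vec a = (\<lambda>b. if b = a then 1 else 0)"

definition monomial_module_iso ::
  "nat \<Rightarrow> (nat \<Rightarrow> nat) set \<Rightarrow> (nat \<Rightarrow> nat) set \<Rightarrow> (nat \<Rightarrow> nat) set \<Rightarrow> (nat \<Rightarrow> nat) set \<Rightarrow>
   (((nat \<Rightarrow> nat) \<Rightarrow> 'k::field) \<Rightarrow> ((nat \<Rightarrow> nat) \<Rightarrow> 'k)) \<Rightarrow> bool" where
  "monomial_module_iso n K I L J \<phi> \<longleftrightarrow>
     (\<forall>f\<in>qspace K I. \<forall>g\<in>qspace K I. \<phi> (\<lambda>a. f a + g a) = (\<lambda>a. \<phi> f a + \<phi> g a)) \<and>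
     (\<forall>c. \<forall>f\<in>qspace K I. \<phi> (\<lambda>a. c * f a) = (\<lambda>a. c * \<phi> f a)) \<and>
     (\<forall>i<n. \<forall>f\<in>qspace K I. \<phi> (xmul K I i f) = xmul L J i (\<phi> f)) \<and>
     bij_betw \<phi> (qspace K I) (qspace L J) \<and>
     (\<forall>a\<in>K - I. \<exists>b\<in>L - J. \<phi> (mono_vec a) = mono_vec b)"

definition mono_map ::
  "(((nat \<Rightarrow> nat) \<Rightarrow> 'k::field) \<Rightarrow> ((nat \<Rightarrow> nat) \<Rightarrow> 'k)) \<Rightarrow> (nat \<Rightarrow> nat) \<Rightarrow> (nat \<Rightarrow> nat)" where
  "mono_map \<phi> a = (THE b. \<phi> (mono_vec a) = (mono_vec b :: (nat \<Rightarrow> nat) \<Rightarrow> 'k))"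

text \<open>Natural monomial basis of M = (S/I + S/J)/<(f,-phi f)>: the monomials of lambda
(from S/I, tagged Inl) together with the monomials of mu not in the skew shape of L/J
(from S/J, tagged Inr); a monomial b of L/J is identified with the monomial
phi^-1(b) of K/I.\<close>
definition Mbasis :: "nat \<Rightarrow> (nat \<Rightarrow> nat) set \<Rightarrow> (nat \<Rightarrow> nat) set \<Rightarrow> (nat \<Rightarrow> nat) set \<Rightarrow>
    ((nat \<Rightarrow> nat) + (nat \<Rightarrow> nat)) set" where
  "Mbasis n I J L = Inl ` young n I \<union> Inr ` (young n J - skew L J)"

text \<open>Image of a basis element under multiplication by x_i (None = zero).\<close>
definition Mstep ::
  "nat \<Rightarrow> (nat \<Rightarrow> nat) set \<Rightarrow> (nat \<Rightarrow> nat) set \<Rightarrow> (nat \<Rightarrow> nat) set \<Rightarrow> (nat \<Rightarrow> nat) set \<Rightarrow>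
   (((nat \<Rightarrow> nat) \<Rightarrow> 'k::field) \<Rightarrow> ((nat \<Rightarrow> nat) \<Rightarrow> 'k)) \<Rightarrow> nat \<Rightarrow>
   ((nat \<Rightarrow> nat) + (nat \<Rightarrow> nat)) \<Rightarrow> ((nat \<Rightarrow> nat) + (nat \<Rightarrow> nat)) option" where
  "Mstep n K I L J \<phi> i c = (case c of
      Inl a \<Rightarrow> (let a' = a(i := a i + 1) in
                 if a' \<in> young n I then Some (Inl a') else None)
    | Inr b \<Rightarrow> (let b' = b(i := b i + 1) in
                 if b' \<notin> young n J then None
                 else if b' \<in> skew L J then Some (Inl (inv_into (skew K I) (mono_map \<phi>) b'))
                 else Some (Inr b')))"

definition Amat ::
  "nat \<Rightarrow> (nat \<Rightarrow> nat) set \<Rightarrow> (nat \<Rightarrow> nat) set \<Rightarrow> (nat \<Rightarrow> nat) set \<Rightarrow> (nat \<Rightarrow> nat) set \<Rightarrow>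
   (((nat \<Rightarrow> nat) \<Rightarrow> 'k::field) \<Rightarrow> ((nat \<Rightarrow> nat) \<Rightarrow> 'k)) \<Rightarrow> nat \<Rightarrow>
   ((nat \<Rightarrow> nat) + (nat \<Rightarrow> nat)) \<Rightarrow> ((nat \<Rightarrow> nat) + (nat \<Rightarrow> nat)) \<Rightarrow> 'k" where
  "Amat n K I L J \<phi> i = (\<lambda>r c. if c \<in> Mbasis n I J L \<and> Mstep n K I L J \<phi> i c = Some r
                                then 1 else 0)"

definition mat_mult :: "'b set \<Rightarrow> ('b \<Rightarrow> 'b \<Rightarrow> 'k::field) \<Rightarrow> ('b \<Rightarrow> 'b \<Rightarrow> 'k) \<Rightarrow> ('b \<Rightarrow> 'b \<Rightarrow> 'k)" where
  "mat_mult B X Y = (\<lambda>r c. \<Sum>t\<in>B. X r t * Y t c)"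

definition mat_one :: "'b set \<Rightarrow> ('b \<Rightarrow> 'b \<Rightarrow> 'k::field)" where
  "mat_one B = (\<lambda>r c. if r = c \<and> r \<in> B then 1 else 0)"

definition mat_scale :: "'k::field \<Rightarrow> ('b \<Rightarrow> 'b \<Rightarrow> 'k) \<Rightarrow> ('b \<Rightarrow> 'b \<Rightarrow> 'k)" where
  "mat_scale c X = (\<lambda>r s. c * X r s)"

inductive_set gen_alg :: "'b set \<Rightarrow> ('b \<Rightarrow> 'b \<Rightarrow> 'k::field) set \<Rightarrow> ('b \<Rightarrow> 'b \<Rightarrow> 'k) set"
  for B :: "'b set" and G :: "('b \<Rightarrow> 'b \<Rightarrow> 'k::field) set" where
  one: "mat_one B \<in> gen_alg B G"
| gen: "A \<in> G \<Longrightarrow> A \<in> gen_alg B G"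
| add: "X \<in> gen_alg B G \<Longrightarrow> Y \<in> gen_alg B G \<Longrightarrow> X + Y \<in> gen_alg B G"
| scale: "X \<in> gen_alg B G \<Longrightarrow> mat_scale c X \<in> gen_alg B G"
| mult: "X \<in> gen_alg B G \<Longrightarrow> Y \<in> gen_alg B G \<Longrightarrow> mat_mult B X Y \<in> gen_alg B G"

definition mat_dim :: "('b \<Rightarrow> 'b \<Rightarrow> 'k::field) set \<Rightarrow> nat" where
  "mat_dim V = vector_space.dim (mat_scale :: 'k \<Rightarrow> ('b \<Rightarrow> 'b \<Rightarrow> 'k) \<Rightarrow> _) V"

end

theory Submission
  imports Defs
begin

(* The monomial map of phi is a bijection from the skew shape nu = K - I onto L - J that
   commutes with multiplication by monomials.  Consequently multiplication by x^m acts on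
   the monomial basis of M by a partial map, and the matrices X_m of these maps satisfy
   X_0 = 1, X_(e_i) = A_i and X_m X_m' = X_(m+m').  So the algebra generated by the A_i is
   spanned by the X_m; X_m = 0 when x^m lies in I and in J, and the X_m with m in the union
   of lambda and mu are linearly independent, since X_m is the only one with a nonzero
   entry in the column of 1 (from S/I or from S/J) and the row of x^m.  Hence its dimension
   is |lambda| + |mu| - |lambda /\ mu|, while d = |lambda| + |mu| - |nu|. *)

section \<open>Exponent vectors and monomial ideals\<close>

definition unit_exp :: "nat \<Rightarrow> nat \<Rightarrow> nat" where
  "unit_exp i = (\<lambda>j. if j = i then 1 else 0)"

lemma fun_upd_Suc_eq_add_unit_exp: "a(i := a i + 1) = a + unit_exp i"
  by (rule ext) (simp add: unit_exp_def)

lemma fun_upd_pred_eq_iff: "(0 < b i \<and> b(i := b i - 1) = a) \<longleftrightarrow> b = a + unit_exp i"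
  by (auto simp: fun_eq_iff unit_exp_def split: if_splits)

lemma mono_set_add: "a \<in> mono_set n \<Longrightarrow> b \<in> mono_set n \<Longrightarrow> a + b \<in> mono_set n"
  by (simp add: mono_set_def)

lemma unit_exp_in_mono_set: "i < n \<Longrightarrow> unit_exp i \<in> mono_set n"
  by (simp add: mono_set_def unit_exp_def)

lemma zero_in_mono_set: "0 \<in> mono_set n"
  by (simp add: mono_set_def)

lemma mono_set_induct:
  assumes "m \<in> mono_set n" and "P 0"
    and "\<And>m i. m \<in> mono_set n \<Longrightarrow> i < n \<Longrightarrow> P m \<Longrightarrow> P (m + unit_exp i)"
  shows "P m"
proof -
  have "P m" if "(\<Sum>i<n. m i) = k" "m \<in> mono_set n" for k m
    using that
  proof (induction k arbitrary: m)
    case 0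
    then have "m = 0"
      by (auto simp: mono_set_def fun_eq_iff) (metis lessThan_iff not_le)
    with assms(2) show ?case by (simp only:)
  next
    case (Suc k)
    then obtain i where i: "i < n" "0 < m i"
      by (metis gr0I lessThan_iff nat.distinct(1) sum.neutral)
    define m' where "m' = m(i := m i - 1)"
    have m': "m' \<in> mono_set n"
      using Suc.prems(2) by (auto simp: mono_set_def m'_def)
    have "(\<Sum>j<n. m j) = m i + (\<Sum>j\<in>{..<n} - {i}. m j)"
      using i by (simp add: sum.remove)
    moreover have "(\<Sum>j<n. m' j) = m' i + (\<Sum>j\<in>{..<n} - {i}. m j)"
      using i by (simp add: sum.remove m'_def)
    ultimately have "(\<Sum>j<n. m j) = (\<Sum>j<n. m' j) + 1"
      using i by (simp add: m'_def)
    with Suc.prems(1) have "P m'"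
      using Suc.IH m' by simp
    moreover have "m = m' + unit_exp i"
      using i fun_upd_pred_eq_iff[of m i m'] by (simp add: m'_def)
    ultimately show ?case
      using assms(3)[OF m' i(1)] by metis
  qed
  then show ?thesis
    using assms(1) by blast
qed

lemma monomial_ideal_subset: "monomial_ideal n E \<Longrightarrow> E \<subseteq> mono_set n"
  unfolding monomial_ideal_def by blast

lemma monomial_ideal_add:
  assumes "monomial_ideal n E" "a \<in> E" "m \<in> mono_set n"
  shows "a + m \<in> E"
proof -
  have "a + m \<in> mono_set n"
    using assms monomial_ideal_subset mono_set_add by blast
  moreover have "a \<le> a + m"
    by (simp add: le_fun_def)
  ultimately show ?thesis
    using assms(1,2) unfolding monomial_ideal_def by blast
qed

lemma zero_in_young:
  assumes "monomial_ideal n E" "y \<in> young n E"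
  shows "0 \<in> young n E"
  using assms monomial_ideal_add[of n E 0 y] by (auto simp: young_def zero_in_mono_set)

lemma young_subset_mono_set: "young n E \<subseteq> mono_set n"
  by (simp add: young_def)

lemma young_addD:
  assumes "monomial_ideal n E" "y \<in> mono_set n" "m \<in> mono_set n" "y + m \<in> young n E"
  shows "y \<in> young n E"
  using assms monomial_ideal_add[of n E y m] by (auto simp: young_def)

lemma finite_skew_if_finite_colength:
  "monomial_ideal n K \<Longrightarrow> finite_colength n I \<Longrightarrow> finite (skew K I)"
  unfolding finite_colength_def skew_def
  by (meson Diff_mono finite_subset monomial_ideal_subset order_refl)

lemma mono_vec_eq_iff: "(mono_vec a :: _ \<Rightarrow> 'k::field) = mono_vec b \<longleftrightarrow> a = b"
  unfolding mono_vec_def by (metis one_neq_zero)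

lemma mono_vec_neq_zero: "(mono_vec a :: _ \<Rightarrow> 'k::field) \<noteq> (\<lambda>_. 0)"
  unfolding mono_vec_def by (metis one_neq_zero)

lemma mono_vec_in_qspace: "a \<in> K - I \<Longrightarrow> mono_vec a \<in> qspace K I"
  by (auto simp: qspace_def mono_vec_def)

lemma xmul_mono_vec:
  "xmul K I i (mono_vec a :: _ \<Rightarrow> 'k::field)
     = (if a + unit_exp i \<in> K - I then mono_vec (a + unit_exp i) else (\<lambda>_. 0))"
proof
  fix b
  show "xmul K I i (mono_vec a) b
      = (if a + unit_exp i \<in> K - I then mono_vec (a + unit_exp i) else (\<lambda>_. 0)) b"
    using fun_upd_pred_eq_iff[of b i a] unfolding xmul_def mono_vec_def by auto
qed

section \<open>Matrix algebras\<close>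

lemma sum_apply_fun: "sum f A x = (\<Sum>a\<in>A. f a x)"
  by (induction A rule: infinite_finite_induct) auto

global_interpretation mat: vector_space "mat_scale :: 'k::field \<Rightarrow> ('b \<Rightarrow> 'b \<Rightarrow> 'k) \<Rightarrow> _"
  by unfold_locales (auto simp: mat_scale_def fun_eq_iff algebra_simps)

lemma mat_dim_eq_dim: "mat_dim = mat.dim"
  by (simp add: mat_dim_def fun_eq_iff)

lemma mat_mult_add_left: "mat_mult B (X + Y) Z = mat_mult B X Z + mat_mult B Y Z"
  by (auto simp: mat_mult_def fun_eq_iff algebra_simps sum.distrib)

lemma mat_mult_add_right: "mat_mult B Z (X + Y) = mat_mult B Z X + mat_mult B Z Y"
  by (auto simp: mat_mult_def fun_eq_iff algebra_simps sum.distrib)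

lemma mat_mult_scale_left: "mat_mult B (mat_scale c X) Z = mat_scale c (mat_mult B X Z)"
  by (auto simp: mat_mult_def mat_scale_def fun_eq_iff algebra_simps sum_distrib_left)

lemma mat_mult_scale_right: "mat_mult B Z (mat_scale c X) = mat_scale c (mat_mult B Z X)"
  by (auto simp: mat_mult_def mat_scale_def fun_eq_iff algebra_simps sum_distrib_left)

lemma mat_mult_zero_left: "mat_mult B 0 Z = 0"
  by (auto simp: mat_mult_def fun_eq_iff)

lemma mat_mult_zero_right: "mat_mult B Z 0 = 0"
  by (auto simp: mat_mult_def fun_eq_iff)

lemma mat_mult_in_span:
  assumes "P \<in> mat.span S" "Q \<in> mat.span S"
    and "\<And>X Y. X \<in> S \<Longrightarrow> Y \<in> S \<Longrightarrow> mat_mult B X Y \<in> mat.span S"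
  shows "mat_mult B P Q \<in> mat.span S"
proof -
  have "mat_mult B X Q \<in> mat.span S" if "X \<in> S" for X
    using assms(2)
  proof (induction rule: mat.span_induct_alt)
    case base
    show ?case
      by (metis mat_mult_zero_right mat.span_zero)
  next
    case (step c Y Z)
    then show ?case
      using assms(3)[OF that]
      by (metis mat_mult_add_right mat_mult_scale_right mat.span_add mat.span_scale)
  qed
  with assms(1) show ?thesis
  proof (induction rule: mat.span_induct_alt)
    case base
    show ?case
      by (metis mat_mult_zero_left mat.span_zero)
  next
    case (step c Y Z)
    then show ?case
      by (metis mat_mult_add_left mat_mult_scale_left mat.span_add mat.span_scale)
  qed
qed

lemma gen_alg_subset_span:
  assumes "mat_one B \<in> mat.span S" "G \<subseteq> mat.span S"
    and "\<And>X Y. X \<in> S \<Longrightarrow> Y \<in> S \<Longrightarrow> mat_mult B X Y \<in> mat.span S"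
  shows "gen_alg B G \<subseteq> mat.span S"
proof
  fix X
  assume "X \<in> gen_alg B G"
  then show "X \<in> mat.span S"
  proof induction
    case (add X Y)
    show ?case
      using add.IH by (rule mat.span_add)
  next
    case (scale X c)
    show ?case
      using scale.IH by (rule mat.span_scale)
  next
    case (mult X Y)
    show ?case
      using mult.IH assms(3) by (rule mat_mult_in_span)
  qed (use assms in blast)+
qed

lemma mat_dim_eq_card:
  fixes X :: "'a \<Rightarrow> 'b \<Rightarrow> 'b \<Rightarrow> 'k::field"
  assumes "finite U" "X ` U \<subseteq> V" "V \<subseteq> mat.span (X ` U)"
    and separating: "\<And>u. u \<in> U \<Longrightarrow> \<exists>r c. \<forall>v\<in>U. X v r c = (if v = u then 1 else 0)"
  shows "mat_dim V = card U"
proof -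
  have inj: "inj_on X U"
  proof (rule inj_onI)
    fix u v
    assume "u \<in> U" "v \<in> U" "X u = X v"
    with separating[of u] show "u = v"
      by (metis zero_neq_one)
  qed
  have "mat.independent (X ` U)"
  proof
    assume "mat.dependent (X ` U)"
    then obtain a where a: "\<exists>Y\<in>X ` U. a Y \<noteq> 0" "(\<Sum>Y\<in>X ` U. mat_scale (a Y) Y) = 0"
      using assms(1) mat.dependent_finite by blast
    then obtain u where u: "u \<in> U" "a (X u) \<noteq> 0"
      by blast
    obtain r c where rc: "\<forall>v\<in>U. X v r c = (if v = u then 1 else 0)"
      using separating[OF u(1)] by blast
    have "0 = (\<Sum>Y\<in>X ` U. mat_scale (a Y) Y) r c"
      by (simp add: a(2))
    also have "\<dots> = (\<Sum>v\<in>U. a (X v) * X v r c)"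
      by (simp add: sum_apply_fun mat_scale_def sum.reindex[OF inj])
    also have "\<dots> = (\<Sum>v\<in>U. if v = u then a (X u) else 0)"
      using rc by (intro sum.cong) auto
    also have "\<dots> = a (X u)"
      using u(1) assms(1) by simp
    finally show False
      using u(2) by simp
  qed
  then have "card (X ` U) = mat.dim V"
    using assms(2,3) by (rule mat.basis_card_eq_dim[rotated 2])
  then show ?thesis
    by (simp add: mat_dim_eq_dim card_image[OF inj])
qed

section \<open>The bijection of skew shapes induced by a monomial isomorphism\<close>

locale monomial_iso =
  fixes n :: nat and I K J L :: "(nat \<Rightarrow> nat) set"
    and \<phi> :: "((nat \<Rightarrow> nat) \<Rightarrow> 'k::field) \<Rightarrow> ((nat \<Rightarrow> nat) \<Rightarrow> 'k)"
  assumes ideal_I: "monomial_ideal n I" and ideal_K: "monomial_ideal n K"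
    and ideal_J: "monomial_ideal n J" and ideal_L: "monomial_ideal n L"
    and finite_skew: "finite (skew K I)"
    and iso: "monomial_module_iso n K I L J \<phi>"
begin

abbreviation g :: "(nat \<Rightarrow> nat) \<Rightarrow> (nat \<Rightarrow> nat)" where
  "g \<equiv> mono_map \<phi>"

abbreviation g_inv :: "(nat \<Rightarrow> nat) \<Rightarrow> (nat \<Rightarrow> nat)" where
  "g_inv \<equiv> inv_into (skew K I) g"

lemma phi_add: "f \<in> qspace K I \<Longrightarrow> f' \<in> qspace K I \<Longrightarrow> \<phi> (\<lambda>a. f a + f' a) = (\<lambda>a. \<phi> f a + \<phi> f' a)"
  using iso unfolding monomial_module_iso_def by blast

lemma phi_scale: "f \<in> qspace K I \<Longrightarrow> \<phi> (\<lambda>a. c * f a) = (\<lambda>a. c * \<phi> f a)"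
  using iso unfolding monomial_module_iso_def by blast

lemma phi_xmul: "i < n \<Longrightarrow> f \<in> qspace K I \<Longrightarrow> \<phi> (xmul K I i f) = xmul L J i (\<phi> f)"
  using iso unfolding monomial_module_iso_def by blast

lemma phi_bij: "bij_betw \<phi> (qspace K I) (qspace L J)"
  using iso unfolding monomial_module_iso_def by blast

lemma phi_zero: "\<phi> (\<lambda>_. 0) = (\<lambda>_. 0)"
  using phi_scale[of "\<lambda>_. 0" 0] by (simp add: qspace_def)

lemma mono_map_in: "a \<in> K - I \<Longrightarrow> g a \<in> L - J"
  and phi_mono_vec: "a \<in> K - I \<Longrightarrow> \<phi> (mono_vec a) = mono_vec (g a)"
proof -
  assume "a \<in> K - I"
  then obtain b where b: "b \<in> L - J" "\<phi> (mono_vec a) = mono_vec b"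
    using iso unfolding monomial_module_iso_def by blast
  then have "g a = b"
    unfolding mono_map_def by (auto simp: mono_vec_eq_iff)
  with b show "g a \<in> L - J" "\<phi> (mono_vec a) = mono_vec (g a)"
    by auto
qed

lemma mono_map_add_unit_exp:
  assumes a: "a \<in> K - I" and i: "i < n"
  shows "a + unit_exp i \<in> I \<longleftrightarrow> g a + unit_exp i \<in> J"
    and "a + unit_exp i \<notin> I \<Longrightarrow> g (a + unit_exp i) = g a + unit_exp i"
proof -
  have "a + unit_exp i \<in> K" "g a + unit_exp i \<in> L"
    using a mono_map_in[OF a] i ideal_K ideal_L monomial_ideal_add unit_exp_in_mono_set
    by blast+
  moreover have "\<phi> (xmul K I i (mono_vec a)) = xmul L J i (mono_vec (g a))"
    using phi_xmul[OF i mono_vec_in_qspace[OF a]] phi_mono_vec[OF a] by simp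
  ultimately have "(if a + unit_exp i \<in> I then (\<lambda>_. 0) else mono_vec (g (a + unit_exp i)))
      = (if g a + unit_exp i \<in> J then (\<lambda>_. 0) else (mono_vec (g a + unit_exp i) :: _ \<Rightarrow> 'k))"
    by (simp add: xmul_mono_vec phi_zero phi_mono_vec split: if_splits)
  then show "a + unit_exp i \<in> I \<longleftrightarrow> g a + unit_exp i \<in> J"
    and "a + unit_exp i \<notin> I \<Longrightarrow> g (a + unit_exp i) = g a + unit_exp i"
    using mono_vec_neq_zero[where 'k = 'k] by (auto simp: mono_vec_eq_iff dest: sym split: if_splits)
qed

lemma mono_map_add:
  assumes a: "a \<in> K - I" and m: "m \<in> mono_set n"
  shows "a + m \<in> I \<longleftrightarrow> g a + m \<in> J"
    and "a + m \<notin> I \<Longrightarrow> g (a + m) = g a + m"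
proof -
  have "(a + m \<in> I \<longleftrightarrow> g a + m \<in> J) \<and> (a + m \<notin> I \<longrightarrow> g (a + m) = g a + m)"
    (is "?P m")
    using m
  proof (rule mono_set_induct[where P = ?P])
    show "?P 0"
      using a mono_map_in[OF a] by simp
  next
    fix m i
    assume m: "m \<in> mono_set n" and i: "i < n" and IH: "?P m"
    have e: "unit_exp i \<in> mono_set n"
      using i by (rule unit_exp_in_mono_set)
    show "?P (m + unit_exp i)"
    proof (cases "a + m \<in> I")
      case True
      have "a + m + unit_exp i \<in> I"
        using True by (rule monomial_ideal_add[OF ideal_I _ e])
      moreover have "g a + m + unit_exp i \<in> J"
        using True IH by (intro monomial_ideal_add[OF ideal_J _ e]) blast
      ultimately show ?thesis
        by (metis add.assoc)
    next
      case False
      have "a + m \<in> K"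
        using a m ideal_K monomial_ideal_add by blast
      with False IH mono_map_add_unit_exp[of "a + m" i] i show ?thesis
        by (metis Diff_iff add.assoc)
    qed
  qed
  then show "a + m \<in> I \<longleftrightarrow> g a + m \<in> J" and "a + m \<notin> I \<Longrightarrow> g (a + m) = g a + m"
    by blast+
qed

lemma inj_on_mono_map: "inj_on g (K - I)"
proof (rule inj_onI)
  fix a b
  assume a: "a \<in> K - I" and b: "b \<in> K - I" and "g a = g b"
  then have "\<phi> (mono_vec a) = \<phi> (mono_vec b)"
    by (simp add: phi_mono_vec)
  then have "(mono_vec a :: _ \<Rightarrow> 'k) = mono_vec b"
    using phi_bij mono_vec_in_qspace[OF a] mono_vec_in_qspace[OF b]
    by (meson bij_betw_def inj_onD)
  then show "a = b"
    by (simp add: mono_vec_eq_iff)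
qed

lemma phi_expansion:
  assumes "finite F" "F \<subseteq> K - I" "\<And>a. a \<notin> F \<Longrightarrow> f a = 0"
  shows "\<phi> f = (\<lambda>b. \<Sum>a\<in>F. f a * mono_vec (g a) b)"
  using assms
proof (induction F arbitrary: f rule: finite_induct)
  case empty
  then have "f = (\<lambda>_. 0)"
    by auto
  then show ?case
    by (simp add: phi_zero)
next
  case (insert x F)
  define f' where "f' = (\<lambda>a. if a = x then 0 else f a)"
  have x: "x \<in> K - I"
    using insert.prems(1) by simp
  have f'q: "f' \<in> qspace K I"
    using insert.prems by (auto simp: f'_def qspace_def)
  have u: "(\<lambda>a. f x * mono_vec x a) \<in> qspace K I"
    using x by (auto simp: qspace_def mono_vec_def)
  have "\<phi> f = \<phi> (\<lambda>a. f x * mono_vec x a + f' a)"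
    by (intro arg_cong[where f = \<phi>] ext) (simp add: f'_def mono_vec_def)
  also have "\<dots> = (\<lambda>b. \<phi> (\<lambda>a. f x * mono_vec x a) b + \<phi> f' b)"
    by (rule phi_add[OF u f'q])
  also have "\<phi> (\<lambda>a. f x * mono_vec x a) = (\<lambda>b. f x * mono_vec (g x) b)"
    using phi_scale[OF mono_vec_in_qspace[OF x]] phi_mono_vec[OF x] by simp
  also have "\<phi> f' = (\<lambda>b. \<Sum>a\<in>F. f' a * mono_vec (g a) b)"
    by (rule insert.IH) (use insert.prems in \<open>auto simp: f'_def\<close>)
  also have "\<dots> = (\<lambda>b. \<Sum>a\<in>F. f a * mono_vec (g a) b)"
    using insert.hyps(2) by (intro ext sum.cong) (auto simp: f'_def)
  finally show ?case
    using insert.hyps by simp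
qed

lemma mono_map_image: "g ` (K - I) = L - J"
proof
  show "g ` (K - I) \<subseteq> L - J"
    using mono_map_in by blast
  show "L - J \<subseteq> g ` (K - I)"
  proof
    fix b
    assume "b \<in> L - J"
    then obtain f where f: "f \<in> qspace K I" "\<phi> f = mono_vec b"
      using phi_bij mono_vec_in_qspace[of b L J] by (metis bij_betw_imp_surj_on imageE)
    have "\<phi> f = (\<lambda>b. \<Sum>a\<in>K - I. f a * mono_vec (g a) b)"
      using finite_skew f(1) by (intro phi_expansion) (auto simp: qspace_def skew_def)
    then have "(\<Sum>a\<in>K - I. f a * mono_vec (g a) b) \<noteq> (0::'k)"
      using f(2) by (metis mono_vec_def zero_neq_one)
    then obtain a where a: "a \<in> K - I" "f a * mono_vec (g a) b \<noteq> 0"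
      by (rule sum.not_neutral_contains_not_neutral)
    then have "g a = b"
      by (metis mono_vec_def mult_zero_right)
    with a(1) show "b \<in> g ` (K - I)"
      by blast
  qed
qed

lemma bij_betw_mono_map: "bij_betw g (skew K I) (skew L J)"
  using inj_on_mono_map mono_map_image by (simp add: bij_betw_def skew_def)

lemma mono_map_inv_in: "y \<in> skew L J \<Longrightarrow> g_inv y \<in> skew K I"
  using bij_betw_mono_map by (metis bij_betw_def inv_into_into)

lemma mono_map_inv_right: "y \<in> skew L J \<Longrightarrow> g (g_inv y) = y"
  using bij_betw_mono_map by (metis bij_betw_def f_inv_into_f)

lemma mono_map_inv_left: "x \<in> skew K I \<Longrightarrow> g_inv (g x) = x"
  using bij_betw_mono_map by (metis bij_betw_def inv_into_f_f)

end

section \<open>Multiplication by monomials on the glued module\<close>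

locale glued_module = monomial_iso n I K J L \<phi>
  for n I K J L and \<phi> :: "((nat \<Rightarrow> nat) \<Rightarrow> 'k::field) \<Rightarrow> ((nat \<Rightarrow> nat) \<Rightarrow> 'k)" +
  assumes finite_colength_I: "finite_colength n I"
    and finite_colength_J: "finite_colength n J"
begin

abbreviation B :: "((nat \<Rightarrow> nat) + (nat \<Rightarrow> nat)) set" where
  "B \<equiv> Mbasis n I J L"

text \<open>The basis element of M representing the class of the monomial y of S/J; monomials of
  L/J are identified through phi with monomials of K/I.\<close>

definition Jclass :: "(nat \<Rightarrow> nat) \<Rightarrow> (nat \<Rightarrow> nat) + (nat \<Rightarrow> nat)" where
  "Jclass y = (if y \<in> skew L J then Inl (g_inv y) else Inr y)"

definition Mshift :: "(nat \<Rightarrow> nat) \<Rightarrow> (nat \<Rightarrow> nat) + (nat \<Rightarrow> nat) \<Rightarrow>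
    ((nat \<Rightarrow> nat) + (nat \<Rightarrow> nat)) option" where
  "Mshift m c = (case c of
      Inl a \<Rightarrow> if a + m \<in> young n I then Some (Inl (a + m)) else None
    | Inr b \<Rightarrow> if b + m \<in> young n J then Some (Jclass (b + m)) else None)"

definition Mmat ::
  "(nat \<Rightarrow> nat) \<Rightarrow> (nat \<Rightarrow> nat) + (nat \<Rightarrow> nat) \<Rightarrow> (nat \<Rightarrow> nat) + (nat \<Rightarrow> nat) \<Rightarrow> 'k"
  where "Mmat m = (\<lambda>r c. if c \<in> B \<and> Mshift m c = Some r then 1 else 0)"

lemma finite_young_I: "finite (young n I)"
  using finite_colength_I by (simp add: finite_colength_def young_def)

lemma finite_young_J: "finite (young n J)"
  using finite_colength_J by (simp add: finite_colength_def young_def)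

lemma finite_Mbasis: "finite B"
  using finite_young_I finite_young_J by (simp add: Mbasis_def)

lemma Jclass_in_Mbasis: "y \<in> young n J \<Longrightarrow> Jclass y \<in> B"
  using mono_map_inv_in monomial_ideal_subset[OF ideal_K]
  by (auto simp: Jclass_def Mbasis_def young_def skew_def)

lemma inj_on_Jclass: "inj_on Jclass (young n J)"
  unfolding Jclass_def by (rule inj_onI) (metis Inl_Inr_False Inl_inject Inr_inject mono_map_inv_right)

text \<open>Here the module structure of phi enters: identifying the monomials of L/J with
  those of K/I commutes with multiplication by x^m.\<close>

lemma Mshift_Jclass:
  assumes y: "y \<in> young n J" and m: "m \<in> mono_set n"
  shows "Mshift m (Jclass y) = (if y + m \<in> young n J then Some (Jclass (y + m)) else None)"
proof (cases "y \<in> skew L J")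
  case False
  then show ?thesis
    by (simp add: Jclass_def Mshift_def)
next
  case True
  define x where "x = g_inv y"
  have x: "x \<in> K - I" and gx: "g x = y"
    using mono_map_inv_in[OF True] mono_map_inv_right[OF True] by (simp_all add: x_def skew_def)
  have xm: "x + m \<in> mono_set n"
    using x m monomial_ideal_subset[OF ideal_K] mono_set_add by blast
  have ym: "y + m \<in> L"
    using True m by (intro monomial_ideal_add[OF ideal_L]) (simp_all add: skew_def)
  have ym': "y + m \<in> mono_set n"
    using ym monomial_ideal_subset[OF ideal_L] by blast
  have young_iff: "x + m \<in> young n I \<longleftrightarrow> y + m \<in> young n J"
    using mono_map_add(1)[OF x m] gx xm ym' by (simp add: young_def)
  have "Jclass (y + m) = Inl (x + m)" if "y + m \<in> young n J"
  proof -
    have yJ: "y + m \<in> skew L J" and xI: "x + m \<in> skew K I"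
      using that ym young_iff x m monomial_ideal_add[OF ideal_K] by (simp_all add: skew_def young_def)
    have "g (x + m) = y + m"
      using mono_map_add(2)[OF x m] gx xI by (simp add: skew_def)
    then have "g_inv (y + m) = x + m"
      using mono_map_inv_left[OF xI] by simp
    with yJ show ?thesis
      by (simp add: Jclass_def)
  qed
  moreover have "Jclass y = Inl x"
    using True by (simp add: Jclass_def x_def)
  ultimately show ?thesis
    by (simp add: Mshift_def young_iff)
qed

lemma Mshift_in_Mbasis:
  assumes "Mshift m c = Some t"
  shows "t \<in> B"
proof (cases c)
  case Inl
  then show ?thesis
    using assms by (auto simp: Mshift_def Mbasis_def split: if_splits)
next
  case Inr
  then show ?thesis
    using assms by (auto simp: Mshift_def split: if_splits intro: Jclass_in_Mbasis)
qed

lemma Mshift_zero: "c \<in> B \<Longrightarrow> Mshift 0 c = Some c"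
  by (auto simp: Mshift_def Mbasis_def Jclass_def)

lemma Mshift_eq_None: "c \<in> B \<Longrightarrow> m \<in> I \<Longrightarrow> m \<in> J \<Longrightarrow> Mshift m c = None"
  using monomial_ideal_add[OF ideal_I, of m] monomial_ideal_add[OF ideal_J, of m]
  by (auto simp: Mshift_def Mbasis_def young_def add.commute)

lemma Mshift_add:
  assumes c: "c \<in> B" and m: "m \<in> mono_set n" and m': "m' \<in> mono_set n"
  shows "Mshift (m' + m) c = Option.bind (Mshift m' c) (Mshift m)"
proof (cases c)
  case (Inl a)
  with c have "a \<in> mono_set n"
    by (auto simp: Mbasis_def young_def)
  then have "a + m' \<in> mono_set n"
    using m' by (rule mono_set_add)
  then show ?thesis
    using Inl young_addD[OF ideal_I _ m] by (auto simp: Mshift_def add.assoc)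
next
  case (Inr b)
  with c have b: "b \<in> young n J"
    by (auto simp: Mbasis_def)
  then have bm': "b + m' \<in> mono_set n"
    using m' mono_set_add young_subset_mono_set by blast
  show ?thesis
  proof (cases "b + m' \<in> young n J")
    case True
    then show ?thesis
      using Inr Mshift_Jclass[OF True m] by (simp add: Mshift_def add.assoc)
  next
    case False
    then have "b + (m' + m) \<notin> young n J"
      using young_addD[OF ideal_J bm' m] by (metis add.assoc)
    with False Inr show ?thesis
      by (simp add: Mshift_def)
  qed
qed

lemma Mstep_eq_Mshift: "Mstep n K I L J \<phi> i = Mshift (unit_exp i)"
  unfolding Mstep_def Let_def fun_upd_Suc_eq_add_unit_exp
  by (intro ext) (simp add: Mshift_def Jclass_def split: sum.split)

lemma Mmat_zero: "Mmat 0 = mat_one B"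
  by (intro ext) (auto simp: Mmat_def mat_one_def Mshift_zero)

lemma Mmat_unit_exp: "Mmat (unit_exp i) = Amat n K I L J \<phi> i"
  by (intro ext) (simp add: Mmat_def Amat_def Mstep_eq_Mshift)

lemma Mmat_eq_zero: "m \<in> I \<Longrightarrow> m \<in> J \<Longrightarrow> Mmat m = 0"
  by (intro ext) (simp add: Mmat_def Mshift_eq_None)

lemma mat_mult_Mmat:
  assumes m: "m \<in> mono_set n" and m': "m' \<in> mono_set n"
  shows "mat_mult B (Mmat m) (Mmat m') = Mmat (m' + m)"
proof (intro ext)
  fix r c
  show "mat_mult B (Mmat m) (Mmat m') r c = Mmat (m' + m) r c"
  proof (cases "c \<in> B")
    case False
    then show ?thesis
      by (simp add: mat_mult_def Mmat_def)
  next
    case c: True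
    show ?thesis
    proof (cases "Mshift m' c")
      case None
      then show ?thesis
        using Mshift_add[OF c m m'] by (simp add: mat_mult_def Mmat_def)
    next
      case (Some t)
      have t: "t \<in> B"
        using Some by (rule Mshift_in_Mbasis)
      have "mat_mult B (Mmat m) (Mmat m') r c = (\<Sum>s\<in>B. if s = t then Mmat m r s else 0)"
        unfolding mat_mult_def by (rule sum.cong) (auto simp: Mmat_def c Some)
      also have "\<dots> = Mmat m r t"
        using t finite_Mbasis by simp
      also have "\<dots> = Mmat (m' + m) r c"
        using Mshift_add[OF c m m'] Some t c by (simp add: Mmat_def)
      finally show ?thesis .
    qed
  qed
qed

abbreviation A :: "((nat \<Rightarrow> nat) + (nat \<Rightarrow> nat) \<Rightarrow> (nat \<Rightarrow> nat) + (nat \<Rightarrow> nat) \<Rightarrow> 'k) set" where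
  "A \<equiv> gen_alg B {Amat n K I L J \<phi> i | i. i < n}"

lemma Mmat_in_gen_alg:
  assumes "m \<in> mono_set n"
  shows "Mmat m \<in> A"
  using assms
proof (rule mono_set_induct)
  show "Mmat 0 \<in> A"
    unfolding Mmat_zero by (rule gen_alg.one)
next
  fix m i
  assume m: "m \<in> mono_set n" and i: "i < n" and IH: "Mmat m \<in> A"
  have "Mmat (unit_exp i) \<in> A"
    using i by (auto simp: Mmat_unit_exp intro: gen_alg.gen)
  from gen_alg.mult[OF this IH] show "Mmat (m + unit_exp i) \<in> A"
    by (simp add: mat_mult_Mmat[OF unit_exp_in_mono_set[OF i] m])
qed

lemma Mmat_in_span:
  assumes "m \<in> mono_set n"
  shows "Mmat m \<in> mat.span (Mmat ` (young n I \<union> young n J))"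
proof (cases "m \<in> young n I \<union> young n J")
  case True
  then show ?thesis
    by (intro mat.span_base imageI)
next
  case False
  with assms have "Mmat m = 0"
    by (intro Mmat_eq_zero) (auto simp: young_def)
  then show ?thesis
    by (metis mat.span_zero)
qed

lemma gen_alg_subset_span_Mmat: "A \<subseteq> mat.span (Mmat ` (young n I \<union> young n J))"
proof (rule gen_alg_subset_span)
  show "mat_one B \<in> mat.span (Mmat ` (young n I \<union> young n J))"
    using Mmat_in_span[OF zero_in_mono_set] by (simp add: Mmat_zero)
  show "{Amat n K I L J \<phi> i | i. i < n} \<subseteq> mat.span (Mmat ` (young n I \<union> young n J))"
    using Mmat_in_span[OF unit_exp_in_mono_set] by (auto simp flip: Mmat_unit_exp)
next
  fix X Y
  assume "X \<in> Mmat ` (young n I \<union> young n J)" "Y \<in> Mmat ` (young n I \<union> young n J)"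
  then obtain u v where u: "u \<in> mono_set n" and v: "v \<in> mono_set n"
    and XY: "X = Mmat u" "Y = Mmat v"
    using young_subset_mono_set by blast
  have "mat_mult B X Y = Mmat (v + u)"
    unfolding XY using u v by (rule mat_mult_Mmat)
  then show "mat_mult B X Y \<in> mat.span (Mmat ` (young n I \<union> young n J))"
    using Mmat_in_span[OF mono_set_add[OF v u]] by simp
qed

text \<open>The column of the class of 1 separates the matrices: Mmat u maps it to the class of
  x^u, which is distinct for distinct u.\<close>

lemma Mmat_separating:
  assumes u: "u \<in> young n I \<union> young n J"
  shows "\<exists>r c. \<forall>v\<in>young n I \<union> young n J. Mmat v r c = (if v = u then 1 else 0)"
proof (cases "u \<in> young n I")
  case True
  then have "Inl 0 \<in> B"
    using zero_in_young[OF ideal_I] by (simp add: Mbasis_def)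
  then have "\<forall>v\<in>young n I \<union> young n J. Mmat v (Inl u) (Inl 0) = (if v = u then 1 else 0)"
    using True by (auto simp: Mmat_def Mshift_def)
  then show ?thesis
    by blast
next
  case False
  with u have uJ: "u \<in> young n J"
    by blast
  then have zero: "0 \<in> young n J"
    by (rule zero_in_young[OF ideal_J])
  have "Mmat v (Jclass u) (Jclass 0) = (if v = u then 1 else 0)" if v: "v \<in> young n I \<union> young n J" for v
  proof -
    have "v \<in> mono_set n"
      using v young_subset_mono_set by blast
    then have "Mshift v (Jclass 0) = (if v \<in> young n J then Some (Jclass v) else None)"
      using Mshift_Jclass[OF zero] by simp
    then show ?thesis
      using Jclass_in_Mbasis[OF zero] inj_on_Jclass uJ by (auto simp: Mmat_def inj_on_eq_iff)
  qed
  then show ?thesis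
    by blast
qed

lemma mat_dim_gen_alg: "mat_dim A = card (young n I \<union> young n J)"
proof (rule mat_dim_eq_card)
  show "finite (young n I \<union> young n J)"
    using finite_young_I finite_young_J by blast
  show "Mmat ` (young n I \<union> young n J) \<subseteq> A"
    using Mmat_in_gen_alg young_subset_mono_set by blast
qed (use gen_alg_subset_span_Mmat Mmat_separating in blast)+

lemma card_Mbasis: "card B + card (skew K I) = card (young n I) + card (young n J)"
proof -
  have sub: "skew L J \<subseteq> young n J"
    using monomial_ideal_subset[OF ideal_L] by (auto simp: skew_def young_def)
  have "card B = card (Inl ` young n I :: ((nat \<Rightarrow> nat) + (nat \<Rightarrow> nat)) set)
      + card (Inr ` (young n J - skew L J) :: ((nat \<Rightarrow> nat) + (nat \<Rightarrow> nat)) set)"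
    unfolding Mbasis_def by (rule card_Un_disjoint) (use finite_young_I finite_young_J in auto)
  also have "\<dots> = card (young n I) + card (young n J - skew L J)"
    by (simp add: card_image)
  finally have "card B = card (young n I) + card (young n J - skew L J)" .
  moreover have "card (young n J - skew L J) + card (skew L J) = card (young n J)"
    using sub finite_young_J by (metis card_Diff_subset card_mono finite_subset le_add_diff_inverse2)
  moreover have "card (skew L J) = card (skew K I)"
    using bij_betw_mono_map by (simp add: bij_betw_same_card)
  ultimately show ?thesis
    by linarith
qed

end

theorem proposition2p1:
  fixes n :: nat
    and I K J L :: "(nat \<Rightarrow> nat) set"
    and \<phi> :: "((nat \<Rightarrow> nat) \<Rightarrow> 'k::field) \<Rightarrow> ((nat \<Rightarrow> nat) \<Rightarrow> 'k)"
  assumes "monomial_ideal n I" and "monomial_ideal n K" and "I \<subseteq> K"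
    and "monomial_ideal n J" and "monomial_ideal n L" and "J \<subseteq> L"
    and "finite_colength n I" and "finite_colength n J"
    and "monomial_module_iso n K I L J \<phi>"
  shows "mat_dim (gen_alg (Mbasis n I J L) {Amat n K I L J \<phi> i | i. i < n})
           \<le> card (Mbasis n I J L)
         \<longleftrightarrow> card (skew K I) \<le> card (young n I \<inter> young n J)"
proof -
  interpret glued_module n I K J L \<phi>
    using assms finite_skew_if_finite_colength by unfold_locales simp_all
  have "card (young n I \<union> young n J) + card (young n I \<inter> young n J)
      = card (young n I) + card (young n J)"
    using finite_young_I finite_young_J by (rule card_Un_Int[symmetric])
  then show ?thesis
    using mat_dim_gen_alg card_Mbasis by linarith
qed

end
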